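(* Let $S$ be a numerical semigroup such that $S = \mathcal{S}(A)$ for some $A \in \mathsf{M}_d(\mathbb{Q})$, and suppose $g = \gcd \mathfrak{s}(S) \geq 2$. Then $S/g = \{ n \in \mathbb{N} : gn \in S\}$ satisfies $S/g = \mathcal{S}(B)$ for some $B \in \mathsf{M}_d(\mathbb{Q})$.
   Context: $\mathbb{N} = \{0,1,2,\ldots\}$. A numerical semigroup is an additive subsemigroup of $\mathbb{N}$ containing $0$ with finite complement in $\mathbb{N}$; its Frobenius number $F(S)$ is the largest element of $\mathbb{N}\setminus S$. The set of nonzero small elements is $\mathfrak{s}(S) = \{ n \in S \setminus \{0\} : n < F(S)\}$. $\mathsf{M}_d(X)$ denotes the $d\times d$ matrices with entries in $X$. For $A \in \mathsf{M}_d(\mathbb{Q})$, $\mathcal{S}(A) = \{ n \in \mathbb{N} : A^n \in \mathsf{M}_d(\mathbb{Z})\}$. *)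

theory Defs
  imports Complex_Main "Jordan_Normal_Form.Matrix"
begin

definition numerical_semigroup :: "nat set \<Rightarrow> bool" where
  "numerical_semigroup S \<longleftrightarrow> 0 \<in> S \<and> (\<forall>a\<in>S. \<forall>b\<in>S. a + b \<in> S) \<and> finite (UNIV - S)"

text \<open>Frobenius number; by the usual convention it is -1 for S = N.\<close>
definition frobenius :: "nat set \<Rightarrow> int" where
  "frobenius S = (if S = UNIV then -1 else int (Max (UNIV - S)))"

definition small_elements :: "nat set \<Rightarrow> nat set" where
  "small_elements S = {n \<in> S. n \<noteq> 0 \<and> int n < frobenius S}"

definition integral_mat :: "rat mat \<Rightarrow> bool" where
  "integral_mat M \<longleftrightarrow> (\<forall>i < dim_row M. \<forall>j < dim_col M. M $$ (i, j) \<in> \<int>)"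

definition int_power_set :: "rat mat \<Rightarrow> nat set" where
  "int_power_set A = {n. integral_mat (A ^\<^sub>m n)}"

end

theory Submission
  imports Defs
begin

text \<open>Since \<open>g * n \<in> \<S>(A)\<close> means that \<open>(A ^ g) ^ n\<close> is integral, \<open>B = A ^ g\<close> works
  for every \<open>g\<close>.\<close>

lemma pow_mat_mult:
  assumes "(A :: 'a :: semiring_1 mat) \<in> carrier_mat n n"
  shows "(A ^\<^sub>m k) ^\<^sub>m l = A ^\<^sub>m (k * l)"
proof -
  interpret semiring "ring_mat TYPE('a) n ()" by (rule semiring_mat)
  have "A \<in> carrier (ring_mat TYPE('a) n ())" using assms by (simp add: ring_mat_simps)
  moreover have "A ^\<^sub>m k \<in> carrier_mat n n" using assms by simp
  ultimately show ?thesis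
    using assms by (simp only: pow_mat_ring_pow[where b = "()"] nat_pow_pow)
qed

lemma int_power_set_pow_mat:
  assumes "A \<in> carrier_mat n n"
  shows "int_power_set (A ^\<^sub>m k) = {l. k * l \<in> int_power_set A}"
  using pow_mat_mult[OF assms] by (simp add: int_power_set_def)

theorem theorem3p2:
  fixes S :: "nat set" and A :: "rat mat" and d :: nat
  assumes "numerical_semigroup S"
    and "A \<in> carrier_mat d d"
    and "S = int_power_set A"
    and "Gcd (small_elements S) \<ge> 2"
  shows "\<exists>B \<in> carrier_mat d d.
           {n. Gcd (small_elements S) * n \<in> S} = int_power_set B"
proof
  let ?g = "Gcd (small_elements S)"
  show "A ^\<^sub>m ?g \<in> carrier_mat d d" using assms(2) by simp
  show "{n. ?g * n \<in> S} = int_power_set (A ^\<^sub>m ?g)"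
    using int_power_set_pow_mat[OF assms(2)] assms(3) by simp
qed

end
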